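(* For any join doctrine $\Phi$, we have $\omega\in\Phi$ if and only if $\omega\notin\Phi^*$.
   Context: A join doctrine is a class $\Phi$ of posets such that: (1) the one-element poset is in $\Phi$; (2) if a poset $P$ is the union of a set $\mathcal{S}$ of subposets each in $\Phi$ and $\mathcal{S}$ (ordered by inclusion) is in $\Phi$, then $P\in\Phi$; (3) if $f:P\to Q$ is monotone with cofinal image and $P\in\Phi$ then $Q\in\Phi$; (4) cofinal subposets of members of $\Phi$ are in $\Phi$. $\omega$ = natural numbers with usual order. $\Phi^*$ is the class of posets $\psi$ such that whenever $\psi=\bigcup\mathcal{S}$ for a set $\mathcal{S}$ of lower subsets of $\psi$ with $\mathcal{S}$ (ordered by inclusion) belonging to $\Phi$, some member of $\mathcal{S}$ equals $\psi$ (i.e. $\psi$ is a $\Phi$-compact element of the lattice of lower subsets of $\psi$). *)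

theory Defs
  imports Main
begin

definition is_poset :: "'b set \<Rightarrow> ('b \<Rightarrow> 'b \<Rightarrow> bool) \<Rightarrow> bool" where
  "is_poset A le \<longleftrightarrow>
     (\<forall>x\<in>A. le x x) \<and>
     (\<forall>x\<in>A. \<forall>y\<in>A. le x y \<and> le y x \<longrightarrow> x = y) \<and>
     (\<forall>x\<in>A. \<forall>y\<in>A. \<forall>z\<in>A. le x y \<and> le y z \<longrightarrow> le x z)"

definition order_iso ::
  "('b \<Rightarrow> 'c) \<Rightarrow> 'b set \<Rightarrow> ('b \<Rightarrow> 'b \<Rightarrow> bool) \<Rightarrow> 'c set \<Rightarrow> ('c \<Rightarrow> 'c \<Rightarrow> bool) \<Rightarrow> bool" where
  "order_iso f A r B s \<longleftrightarrow> bij_betw f A B \<and> (\<forall>x\<in>A. \<forall>y\<in>A. r x y \<longleftrightarrow> s (f x) (f y))"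

text \<open>A class of posets is represented by a set Phi of posets whose carriers live in a
  fixed universe type 'u; a poset on an arbitrary type belongs to the class
  iff it is order-isomorphic to a member of Phi.\<close>

definition in_class ::
  "('u set \<times> ('u \<Rightarrow> 'u \<Rightarrow> bool)) set \<Rightarrow> 'b set \<Rightarrow> ('b \<Rightarrow> 'b \<Rightarrow> bool) \<Rightarrow> bool" where
  "in_class Phi A r \<longleftrightarrow> is_poset A r \<and>
     (\<exists>B s f. (B, s) \<in> Phi \<and> is_poset B s \<and> order_iso f A r B s)"

definition monotone_map ::
  "('b \<Rightarrow> 'c) \<Rightarrow> 'b set \<Rightarrow> ('b \<Rightarrow> 'b \<Rightarrow> bool) \<Rightarrow> 'c set \<Rightarrow> ('c \<Rightarrow> 'c \<Rightarrow> bool) \<Rightarrow> bool" where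
  "monotone_map f A r B s \<longleftrightarrow> f ` A \<subseteq> B \<and> (\<forall>x\<in>A. \<forall>y\<in>A. r x y \<longrightarrow> s (f x) (f y))"

definition cofinal :: "'c set \<Rightarrow> 'c set \<Rightarrow> ('c \<Rightarrow> 'c \<Rightarrow> bool) \<Rightarrow> bool" where
  "cofinal C B s \<longleftrightarrow> C \<subseteq> B \<and> (\<forall>y\<in>B. \<exists>x\<in>C. s y x)"

definition join_doctrine :: "('u set \<times> ('u \<Rightarrow> 'u \<Rightarrow> bool)) set \<Rightarrow> bool" where
  "join_doctrine Phi \<longleftrightarrow>
     \<comment> \<open>(1) the one-element poset is in Phi\<close>
     in_class Phi ({()} :: unit set) (\<lambda>_ _. True) \<and>
     \<comment> \<open>(2) unions of a Phi-set of subposets in Phi\<close>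
     (\<forall>(A :: 'u set) r (S :: 'u set set).
        is_poset A r \<and> S \<subseteq> Pow A \<and> \<Union>S = A \<and> (\<forall>X\<in>S. in_class Phi X r) \<and>
        in_class Phi S (\<subseteq>) \<longrightarrow> in_class Phi A r) \<and>
     \<comment> \<open>(3) images under monotone maps with cofinal image\<close>
     (\<forall>(A :: 'u set) r (B :: 'u set) s f.
        in_class Phi A r \<and> is_poset B s \<and> monotone_map f A r B s \<and> cofinal (f ` A) B s
        \<longrightarrow> in_class Phi B s) \<and>
     \<comment> \<open>(4) cofinal subposets\<close>
     (\<forall>(A :: 'u set) r C.
        in_class Phi A r \<and> cofinal C A r \<longrightarrow> in_class Phi C r)"

definition lower_set :: "'b set \<Rightarrow> ('b \<Rightarrow> 'b \<Rightarrow> bool) \<Rightarrow> 'b set \<Rightarrow> bool" where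
  "lower_set A r X \<longleftrightarrow> X \<subseteq> A \<and> (\<forall>x\<in>X. \<forall>y\<in>A. r y x \<longrightarrow> y \<in> X)"

definition in_star ::
  "('u set \<times> ('u \<Rightarrow> 'u \<Rightarrow> bool)) set \<Rightarrow> 'b set \<Rightarrow> ('b \<Rightarrow> 'b \<Rightarrow> bool) \<Rightarrow> bool" where
  "in_star Phi A r \<longleftrightarrow> is_poset A r \<and>
     (\<forall>S. (\<forall>X\<in>S. lower_set A r X) \<and> \<Union>S = A \<and> in_class Phi S (\<subseteq>) \<longrightarrow> A \<in> S)"

end

theory Submission
  imports Defs "HOL-Library.Infinite_Set"
begin

text \<open>The proper lower subsets of \<open>\<omega>\<close> are exactly the initial segments \<open>{..<n}\<close>, and a
  family of them covers \<open>\<omega>\<close> iff it is unbounded, i.e. iff it is an infinite chain, which is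
  order-isomorphic to \<open>\<omega>\<close>. So \<open>\<omega>\<close> fails to be \<open>\<Phi>\<close>-compact iff some isomorphic copy of \<open>\<omega>\<close>
  lies in \<open>\<Phi>\<close>, iff \<open>\<omega>\<close> itself does.\<close>

lemma is_poset_order: "is_poset (A :: 'a::order set) (\<le>)"
  unfolding is_poset_def by auto

lemma order_iso_comp:
  assumes "order_iso f A r B s" "order_iso g B s C t"
  shows "order_iso (g \<circ> f) A r C t"
  using assms bij_betw_trans[of f A B g C] unfolding order_iso_def bij_betw_def by auto

lemma order_iso_inv_into:
  assumes "order_iso f A r B s"
  shows "order_iso (inv_into A f) B s A r"
  using assms bij_betw_inv_into[of f A B] unfolding order_iso_def
  by (metis bij_betw_imp_surj_on bij_betw_inv_into_right inv_into_into)

lemma in_class_order_iso: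
  assumes "in_class Phi A r" "is_poset B s" "order_iso f A r B s"
  shows "in_class Phi B s"
  using assms order_iso_comp[OF order_iso_inv_into[OF assms(3)]] unfolding in_class_def by blast

lemma order_iso_lessThan: "order_iso lessThan (N :: 'a::linorder set) (\<le>) (lessThan ` N) (\<subseteq>)"
  unfolding order_iso_def bij_betw_def inj_on_def by simp

lemma order_iso_enumerate:
  assumes "infinite (N :: nat set)"
  shows "order_iso (enumerate N) UNIV (\<le>) N (\<le>)"
  using assms bij_enumerate[OF assms] unfolding order_iso_def by simp

lemma in_class_lessThan_image_iff:
  assumes "infinite (N :: nat set)"
  shows "in_class Phi (lessThan ` N) (\<subseteq>) \<longleftrightarrow> in_class Phi (UNIV :: nat set) (\<le>)"
proof -
  have iso: "order_iso (lessThan \<circ> enumerate N) UNIV (\<le>) (lessThan ` N) (\<subseteq>)"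
    using order_iso_comp[OF order_iso_enumerate[OF assms] order_iso_lessThan] .
  show ?thesis
    using in_class_order_iso[OF _ is_poset_order iso]
      in_class_order_iso[OF _ is_poset_order order_iso_inv_into[OF iso]] by blast
qed

lemma lower_set_nat_eq_lessThan:
  assumes "lower_set (UNIV :: nat set) (\<le>) X" "X \<noteq> UNIV"
  shows "X = {..<LEAST n. n \<notin> X}"
proof
  have "(LEAST n. n \<notin> X) \<notin> X"
    using assms(2) by (metis LeastI UNIV_eq_I)
  then show "X \<subseteq> {..<LEAST n. n \<notin> X}"
    using assms(1) unfolding lower_set_def by (metis lessThan_iff not_le_imp_less subsetI UNIV_I)
  show "{..<LEAST n. n \<notin> X} \<subseteq> X"
    using not_less_Least by auto
qed

lemma proper_lower_cover_nat:
  assumes "\<forall>X\<in>S. lower_set (UNIV :: nat set) (\<le>) X" "\<Union>S = UNIV" "UNIV \<notin> S"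
  obtains N where "infinite N" "S = lessThan ` N"
proof
  let ?N = "{n. {..<n} \<in> S}"
  show S_eq: "S = lessThan ` ?N"
  proof
    show "S \<subseteq> lessThan ` ?N"
      using assms(1,3) lower_set_nat_eq_lessThan by (metis (mono_tags) image_eqI mem_Collect_eq subsetI)
  qed auto
  show "infinite ?N"
  proof
    assume "finite ?N"
    then obtain m where m: "\<forall>n\<in>?N. n \<le> m"
      using finite_nat_set_iff_bounded_le by blast
    obtain n where "n \<in> ?N" "m \<in> {..<n}"
      using assms(2) S_eq by (metis UNIV_I Union_iff imageE)
    then show False
      using m by fastforce
  qed
qed

theorem lemma3p6:
  fixes Phi :: "('u set \<times> ('u \<Rightarrow> 'u \<Rightarrow> bool)) set"
  assumes "join_doctrine Phi"
  shows "in_class Phi (UNIV :: nat set) (\<le>) \<longleftrightarrow> \<not> in_star Phi (UNIV :: nat set) (\<le>)"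
proof
  assume "in_class Phi (UNIV :: nat set) (\<le>)"
  let ?L = "range (lessThan :: nat \<Rightarrow> nat set)"
  have "in_class Phi ?L (\<subseteq>)"
    using \<open>in_class Phi UNIV (\<le>)\<close> in_class_lessThan_image_iff[of UNIV Phi] by simp
  moreover have "\<forall>X\<in>?L. lower_set UNIV (\<le>) X"
    unfolding lower_set_def by auto
  moreover have "\<Union>?L = UNIV" "UNIV \<notin> ?L"
    by auto
  ultimately show "\<not> in_star Phi (UNIV :: nat set) (\<le>)"
    unfolding in_star_def by blast
next
  assume "\<not> in_star Phi (UNIV :: nat set) (\<le>)"
  then obtain S where cover: "\<forall>X\<in>S. lower_set (UNIV :: nat set) (\<le>) X" "\<Union>S = UNIV"
    "UNIV \<notin> S" and S_in_class: "in_class Phi S (\<subseteq>)"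
    unfolding in_star_def using is_poset_order by blast
  obtain N where "infinite N" "S = lessThan ` N"
    using cover by (rule proper_lower_cover_nat)
  then show "in_class Phi (UNIV :: nat set) (\<le>)"
    using S_in_class in_class_lessThan_image_iff by blast
qed

end
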